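(* Let $f$ satisfy the $L$-descent condition for some $L>0$, and let $\{x^k\}$ be generated by Algorithm IRG with $\theta<\mu$, $\rho_k=\varepsilon_k$ for all $k$, and stepsizes either diminishing ($t_k>0$, $t_k\downarrow0$, $\sum_k t_k=\infty$) or of constant type (there exist $\delta\in(0,2)$ and $\delta'>0$ with $\delta'\le\frac{2-\delta}{L}$ and $t_k\in[\delta',\frac{2-\delta}{L}]$ for all $k$). Assume that $\bar x$ is an accumulation point of $\{x^k\}$ and that $f$ satisfies the KL property at $\bar x$. Then $\bar x$ is a stationary point of $f$ and $x^k\to\bar x$ as $k\to\infty$.
   Context: Algorithm IRG (general inexact reduced gradient framework). Let $f:\mathbb R^n\to\mathbb R$ be continuously differentiable. Parameters: initial point $x^1\in\mathbb R^n$, initial radii $\varepsilon_1>0$, $r_1>0$, reduction factors $\mu,\theta\in(0,1)$, and a sequence $\{\rho_k\}$ of positive numbers. For $k=1,2,\dots$: (1) choose $g^k\in\mathbb R^n$ with $\|g^k-\nabla f(x^k)\|\le\min\{\varepsilon_k,\rho_k\}$; (2) if $\|g^k\|\le r_k+\varepsilon_k$, set $r_{k+1}=\mu r_k$, $\varepsilon_{k+1}=\theta\varepsilon_k$, $d^k=0$; otherwise set $r_{k+1}=r_k$, $\varepsilon_{k+1}=\varepsilon_k$ and $d^k=-\frac{\|g^k\|-\varepsilon_k}{\|g^k\|}g^k$; (3) choose a stepsize $t_k>0$ by some rule; (4) set $x^{k+1}=x^k+t_kd^k$. $f$ satisfies the $L$-descent condition if $f(y)\le f(x)+\langle\nabla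 f(x),y-x\rangle+\frac L2\|y-x\|^2$ for all $x,y\in\mathbb R^n$. KL property: $f$ satisfies the KL property at $\bar x$ if there exist $\eta>0$, a neighborhood $U$ of $\bar x$, and a nondecreasing function $\psi:(0,\eta)\to(0,\infty)$ such that $1/\psi$ is integrable over $(0,\eta)$ and $\|\nabla f(x)\|\ge\psi(f(x)-f(\bar x))$ for all $x\in U$ with $f(\bar x)<f(x)<f(\bar x)+\eta$. *)

theory Defs
  imports "HOL-Analysis.Analysis"
begin

definition L_descent :: "('a::real_inner \<Rightarrow> real) \<Rightarrow> ('a \<Rightarrow> 'a) \<Rightarrow> real \<Rightarrow> bool" where
  "L_descent f grad L \<longleftrightarrow>
     (\<forall>x y. f y \<le> f x + grad x \<bullet> (y - x) + L / 2 * (norm (y - x))\<^sup>2)"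

text \<open>Runs of Algorithm IRG (iterations indexed from 0 instead of 1).\<close>
definition IRG_run ::
  "('a::real_inner \<Rightarrow> 'a) \<Rightarrow> real \<Rightarrow> real \<Rightarrow> (nat \<Rightarrow> real) \<Rightarrow>
   (nat \<Rightarrow> 'a) \<Rightarrow> (nat \<Rightarrow> 'a) \<Rightarrow> (nat \<Rightarrow> real) \<Rightarrow> (nat \<Rightarrow> real) \<Rightarrow>
   (nat \<Rightarrow> 'a) \<Rightarrow> (nat \<Rightarrow> real) \<Rightarrow> bool" where
  "IRG_run grad \<mu> \<theta> \<rho> x g \<epsilon> r d t \<longleftrightarrow>
     \<epsilon> 0 > 0 \<and> r 0 > 0 \<and> 0 < \<mu> \<and> \<mu> < 1 \<and> 0 < \<theta> \<and> \<theta> < 1 \<and>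
     (\<forall>k. \<rho> k > 0) \<and>
     (\<forall>k. norm (g k - grad (x k)) \<le> min (\<epsilon> k) (\<rho> k)) \<and>
     (\<forall>k. if norm (g k) \<le> r k + \<epsilon> k
          then r (Suc k) = \<mu> * r k \<and> \<epsilon> (Suc k) = \<theta> * \<epsilon> k \<and> d k = 0
          else r (Suc k) = r k \<and> \<epsilon> (Suc k) = \<epsilon> k \<and>
               d k = - ((norm (g k) - \<epsilon> k) / norm (g k)) *\<^sub>R g k) \<and>
     (\<forall>k. t k > 0) \<and>
     (\<forall>k. x (Suc k) = x k + t k *\<^sub>R d k)"

definition diminishing_steps :: "(nat \<Rightarrow> real) \<Rightarrow> bool" where
  "diminishing_steps t \<longleftrightarrow> (\<forall>k. t k > 0) \<and> decseq t \<and> t \<longlonglongrightarrow> 0 \<and>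
     filterlim (\<lambda>n. \<Sum>k<n. t k) at_top sequentially"

definition constant_type_steps :: "real \<Rightarrow> (nat \<Rightarrow> real) \<Rightarrow> bool" where
  "constant_type_steps L t \<longleftrightarrow> (\<exists>\<delta> \<delta>'. 0 < \<delta> \<and> \<delta> < 2 \<and> 0 < \<delta>' \<and> \<delta>' \<le> (2 - \<delta>) / L \<and>
     (\<forall>k. \<delta>' \<le> t k \<and> t k \<le> (2 - \<delta>) / L))"

definition accumulation_point :: "(nat \<Rightarrow> 'a::topological_space) \<Rightarrow> 'a \<Rightarrow> bool" where
  "accumulation_point x a \<longleftrightarrow> (\<exists>\<sigma>. strict_mono \<sigma> \<and> (x \<circ> \<sigma>) \<longlonglongrightarrow> a)"

definition KL_at :: "('a::real_normed_vector \<Rightarrow> real) \<Rightarrow> ('a \<Rightarrow> 'a) \<Rightarrow> 'a \<Rightarrow> bool" where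
  "KL_at f grad xb \<longleftrightarrow>
     (\<exists>\<eta> U \<psi>. \<eta> > 0 \<and> open U \<and> xb \<in> U \<and>
        mono_on {0<..<\<eta>} \<psi> \<and> (\<forall>s\<in>{0<..<\<eta>}. \<psi> s > 0) \<and>
        (\<lambda>s. 1 / \<psi> s) integrable_on {0<..<\<eta>} \<and>
        (\<forall>x\<in>U. f xb < f x \<and> f x < f xb + \<eta> \<longrightarrow> norm (grad x) \<ge> \<psi> (f x - f xb)))"

end

theory Submission
  imports Defs
begin

text \<open>
  With \<open>\<rho>\<^sub>k = \<epsilon>\<^sub>k\<close> and \<open>\<theta> \<le> \<mu>\<close> the ratio \<open>\<epsilon>\<^sub>k / r\<^sub>k\<close> never increases, so at every
  serious step (\<open>d\<^sub>k \<noteq> 0\<close>) the direction satisfies \<open>\<langle>\<nabla>f(x\<^sub>k), d\<^sub>k\<rangle> \<le> -\<parallel>d\<^sub>k\<parallel>\<^sup>2\<close> and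
  \<open>\<parallel>\<nabla>f(x\<^sub>k)\<parallel> \<le> C \<parallel>d\<^sub>k\<parallel>\<close>. The descent lemma and either step-size rule then give the
  sufficient decrease \<open>f(x\<^sub>k\<^sub>+\<^sub>1) \<le> f(x\<^sub>k) - c t\<^sub>k \<parallel>d\<^sub>k\<parallel>\<^sup>2\<close> for large \<open>k\<close>.

  Near the accumulation point, the KL property with the desingularizing function
  \<open>\<phi>(s) = \<integral>\<^sub>0\<^sup>s 1/\<psi>\<close> bounds each step \<open>\<parallel>x\<^sub>k\<^sub>+\<^sub>1 - x\<^sub>k\<parallel>\<close> by a multiple of
  \<open>\<phi>(f(x\<^sub>k) - f(x\<^sup>*)) - \<phi>(f(x\<^sub>k\<^sub>+\<^sub>1) - f(x\<^sup>*))\<close>. Once an iterate is close enough to the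
  accumulation point these bounds telescope, the iterates never leave the KL neighbourhood,
  the trajectory has finite length, and the whole sequence converges.

  If null steps stopped occurring, \<open>r\<^sub>k\<close> would be eventually constant, every step would
  decrease \<open>f\<close> by at least \<open>c r\<^sup>2 t\<^sub>k\<close>, and \<open>\<Sum> t\<^sub>k = \<infinity>\<close> would contradict the
  convergence of \<open>f(x\<^sub>k)\<close>. Hence null steps recur, \<open>r\<^sub>k, \<epsilon>\<^sub>k \<rightarrow> 0\<close>, and the bound
  \<open>\<parallel>\<nabla>f(x\<^sub>k)\<parallel> \<le> r\<^sub>k + 2\<epsilon>\<^sub>k\<close> at null steps forces \<open>\<nabla>f(x\<^sup>*) = 0\<close>.
\<close>

lemma desingularizing_function_exists:
  fixes \<psi> :: "real \<Rightarrow> real"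
  assumes \<eta>: "\<eta> > 0" and mono: "mono_on {0<..<\<eta>} \<psi>"
    and pos: "\<And>s. s \<in> {0<..<\<eta>} \<Longrightarrow> \<psi> s > 0"
    and int: "(\<lambda>s. 1 / \<psi> s) integrable_on {0<..<\<eta>}"
  obtains \<phi> where "\<And>a b. 0 < b \<Longrightarrow> b \<le> a \<Longrightarrow> a < \<eta> \<Longrightarrow> a - b \<le> \<psi> a * (\<phi> a - \<phi> b)"
    and "\<And>s. 0 \<le> s \<Longrightarrow> s \<le> \<eta> \<Longrightarrow> 0 \<le> \<phi> s"
    and "(\<phi> \<longlongrightarrow> 0) (at_right 0)"
proof -
  define h where "h u = (if 0 < u \<and> u < \<eta> then 1 / \<psi> u else 0)" for u
  define \<phi> where "\<phi> s = integral {0..s} h" for s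
  have "h integrable_on {0<..<\<eta>}"
    using int by (rule integrable_eq) (simp add: h_def)
  then have "h integrable_on {0..\<eta>}"
    by (simp add: integrable_on_Icc_iff_Ioo)
  then have h_int: "h integrable_on {a..b}" if "0 \<le> a" "b \<le> \<eta>" for a b
    by (rule integrable_on_subinterval) (use that in auto)
  have h_nonneg: "0 \<le> h u" for u
    using pos by (auto simp: h_def less_imp_le)
  have "a - b \<le> \<psi> a * (\<phi> a - \<phi> b)" if ab: "0 < b" "b \<le> a" "a < \<eta>" for a b
  proof -
    have "integral {0..b} h + integral {b..a} h = integral {0..a} h"
      using ab h_int by (intro Henstock_Kurzweil_Integration.integral_combine) auto
    then have "\<phi> a - \<phi> b = integral {b..a} h" by (simp add: \<phi>_def)
    moreover have "integral {b..a} (\<lambda>u. 1 / \<psi> a) \<le> integral {b..a} h"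
    proof (rule integral_le[OF integrable_const_ivl h_int])
      fix u assume u: "u \<in> {b..a}"
      then have "\<psi> u \<le> \<psi> a" "0 < \<psi> u"
        using ab by (auto intro!: mono_onD[OF mono] pos)
      then show "1 / \<psi> a \<le> h u" using u ab by (auto simp: h_def intro!: divide_left_mono)
    qed (use ab in auto)
    ultimately show ?thesis using ab pos[of a] by (simp add: field_simps)
  qed
  moreover have "0 \<le> \<phi> s" if "0 \<le> s" "s \<le> \<eta>" for s
    unfolding \<phi>_def using that h_int h_nonneg by (intro integral_nonneg) auto
  moreover have "(\<phi> \<longlongrightarrow> 0) (at_right 0)"
  proof -
    have "continuous_on {0..\<eta>} \<phi>"
      unfolding \<phi>_def using h_int by (intro indefinite_integral_continuous_1) auto
    then have "(\<phi> \<longlongrightarrow> \<phi> 0) (at 0 within {0..\<eta>})"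
      using \<eta> by (simp add: continuous_on_def)
    moreover have "\<phi> 0 = 0" by (simp add: \<phi>_def)
    ultimately show ?thesis using \<eta> by (simp add: at_within_Icc_at_right)
  qed
  ultimately show ?thesis by (rule that)
qed

lemma KL_at_obtains_desingularizer:
  fixes f :: "'a::real_normed_vector \<Rightarrow> real"
  assumes "KL_at f grad xb"
  obtains U \<eta> \<phi> where "open U" "xb \<in> U" "\<eta> > 0"
    and "\<And>s. 0 \<le> s \<Longrightarrow> s \<le> \<eta> \<Longrightarrow> 0 \<le> \<phi> s"
    and "(\<phi> \<longlongrightarrow> 0) (at_right 0)"
    and "\<And>y b. y \<in> U \<Longrightarrow> 0 < b \<Longrightarrow> b \<le> f y - f xb \<Longrightarrow> f y - f xb < \<eta> \<Longrightarrow>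
           f y - f xb - b \<le> norm (grad y) * (\<phi> (f y - f xb) - \<phi> b)"
proof -
  obtain \<eta> U \<psi> where \<eta>: "\<eta> > 0" and U: "open U" "xb \<in> U"
    and mono: "mono_on {0<..<\<eta>} \<psi>" and pos: "\<forall>s\<in>{0<..<\<eta>}. \<psi> s > 0"
    and int: "(\<lambda>s. 1 / \<psi> s) integrable_on {0<..<\<eta>}"
    and KL: "\<And>y. y \<in> U \<Longrightarrow> f xb < f y \<Longrightarrow> f y < f xb + \<eta> \<Longrightarrow> \<psi> (f y - f xb) \<le> norm (grad y)"
    using assms unfolding KL_at_def by blast
  obtain \<phi> where \<phi>: "\<And>a b. 0 < b \<Longrightarrow> b \<le> a \<Longrightarrow> a < \<eta> \<Longrightarrow> a - b \<le> \<psi> a * (\<phi> a - \<phi> b)"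
    and "\<And>s. 0 \<le> s \<Longrightarrow> s \<le> \<eta> \<Longrightarrow> 0 \<le> \<phi> s" and "(\<phi> \<longlongrightarrow> 0) (at_right 0)"
    using desingularizing_function_exists[OF \<eta> mono _ int] pos by blast
  moreover have "f y - f xb - b \<le> norm (grad y) * (\<phi> (f y - f xb) - \<phi> b)"
    if "y \<in> U" "0 < b" "b \<le> f y - f xb" "f y - f xb < \<eta>" for y b
  proof -
    define a where "a = f y - f xb"
    have le: "a - b \<le> \<psi> a * (\<phi> a - \<phi> b)" and "0 < \<psi> a" "b \<le> a"
      using that pos \<phi> by (auto simp: a_def)
    then have "0 \<le> \<phi> a - \<phi> b"
      by (smt (verit) zero_le_mult_iff)
    then have "\<psi> a * (\<phi> a - \<phi> b) \<le> norm (grad y) * (\<phi> a - \<phi> b)"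
      using that KL by (intro mult_right_mono) (simp_all add: a_def)
    with le show ?thesis by (simp add: a_def)
  qed
  ultimately show ?thesis using that U \<eta> by blast
qed

lemma tendsto_accumulation_point_if_summable_steps:
  fixes x :: "nat \<Rightarrow> 'a::banach"
  assumes "summable (\<lambda>k. norm (x (Suc k) - x k))" and "accumulation_point x xb"
  shows "x \<longlonglongrightarrow> xb"
proof -
  have "summable (\<lambda>k. x (Suc k) - x k)"
    using assms(1) by (rule summable_norm_cancel)
  then have "(\<lambda>n. \<Sum>k<n. x (Suc k) - x k) \<longlonglongrightarrow> (\<Sum>k. x (Suc k) - x k)"
    by (rule summable_LIMSEQ)
  then have "(\<lambda>n. x n - x 0) \<longlonglongrightarrow> (\<Sum>k. x (Suc k) - x k)"
    by (simp add: sum_lessThan_telescope)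
  then have "(\<lambda>n. x n - x 0 + x 0) \<longlonglongrightarrow> (\<Sum>k. x (Suc k) - x k) + x 0"
    by (rule tendsto_add) simp
  then have lim: "x \<longlonglongrightarrow> (\<Sum>k. x (Suc k) - x k) + x 0" by simp
  obtain \<sigma> where "strict_mono \<sigma>" "(x \<circ> \<sigma>) \<longlonglongrightarrow> xb"
    using assms(2) unfolding accumulation_point_def by blast
  with lim have "xb = (\<Sum>k. x (Suc k) - x k) + x 0"
    using LIMSEQ_subseq_LIMSEQ LIMSEQ_unique by blast
  with lim show ?thesis by simp
qed

lemma summable_steps_if_local_telescoping:
  fixes x :: "nat \<Rightarrow> 'a::real_normed_vector" and \<Phi> :: "nat \<Rightarrow> real"
  assumes step: "\<And>k. x k \<in> ball z \<rho> \<Longrightarrow> norm (x (Suc k) - x k) \<le> \<Phi> k - \<Phi> (Suc k)"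
    and nonneg: "\<And>k. 0 \<le> \<Phi> k"
    and start: "dist z (x 0) + \<Phi> 0 < \<rho>"
  shows "summable (\<lambda>k. norm (x (Suc k) - x k))"
proof -
  \<comment> \<open>The telescoped bound keeps every iterate in the ball, so the step hypothesis never lapses.\<close>
  have trapped: "(\<Sum>j<m. norm (x (Suc j) - x j)) \<le> \<Phi> 0 - \<Phi> m \<and> x m \<in> ball z \<rho>" for m
  proof (induction m)
    case 0
    then show ?case using start nonneg[of 0] by simp
  next
    case (Suc m)
    then have length: "(\<Sum>j<Suc m. norm (x (Suc j) - x j)) \<le> \<Phi> 0 - \<Phi> (Suc m)"
      using step[of m] by simp
    have "dist z (x (Suc m)) \<le> dist z (x 0) + norm (x (Suc m) - x 0)"
      by (metis dist_norm dist_triangle norm_minus_commute)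
    also have "norm (x (Suc m) - x 0) = norm (\<Sum>j<Suc m. x (Suc j) - x j)"
      by (simp add: sum_lessThan_telescope)
    also have "\<dots> \<le> (\<Sum>j<Suc m. norm (x (Suc j) - x j))"
      by (rule norm_sum)
    finally have "dist z (x (Suc m)) < \<rho>"
      using length start nonneg[of "Suc m"] by linarith
    with length show ?case by simp
  qed
  have "(\<Sum>j<m. norm (x (Suc j) - x j)) \<le> \<Phi> 0" for m
    using trapped[of m] nonneg[of m] by linarith
  then show ?thesis
    by (intro summableI_nonneg_bounded[of _ "\<Phi> 0"]) auto
qed

lemma antimono_tendsto_subseq_limit:
  fixes u :: "nat \<Rightarrow> real"
  assumes dec: "\<And>k. K \<le> k \<Longrightarrow> u (Suc k) \<le> u k"
    and \<sigma>: "strict_mono \<sigma>" and lim: "(u \<circ> \<sigma>) \<longlonglongrightarrow> l"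
  shows "\<And>k. K \<le> k \<Longrightarrow> l \<le> u k" and "u \<longlonglongrightarrow> l"
proof -
  have antimono: "u k \<le> u m" if "K \<le> m" "m \<le> k" for m k
    by (rule lift_Suc_antimono_le_ivl[of "{K..}"]) (use that dec in auto)
  show lower: "l \<le> u k" if "K \<le> k" for k
  proof (rule LIMSEQ_le_const2[OF lim])
    have "(u \<circ> \<sigma>) n \<le> u k" if "k \<le> n" for n
      using antimono[of k "\<sigma> n"] seq_suble[OF \<sigma>, of n] \<open>K \<le> k\<close> that by simp
    then show "\<exists>N. \<forall>n\<ge>N. (u \<circ> \<sigma>) n \<le> u k" by blast
  qed
  have "decseq (\<lambda>n. u (n + K))"
    by (rule decseq_SucI) (simp add: dec)
  moreover have "\<forall>n. l \<le> u (n + K)" using lower by simp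
  ultimately obtain l' where "(\<lambda>n. u (n + K)) \<longlonglongrightarrow> l'"
    by (rule decseq_convergent)
  then have "u \<longlonglongrightarrow> l'" by (rule LIMSEQ_offset)
  moreover from this have "l' = l"
    using LIMSEQ_subseq_LIMSEQ[OF _ \<sigma>] lim LIMSEQ_unique by blast
  ultimately show "u \<longlonglongrightarrow> l" by simp
qed

lemma accumulation_point_frequently_near:
  assumes "accumulation_point x a" and "0 < e"
  shows "\<exists>\<^sub>F k in sequentially. dist (x k) a < e"
proof -
  obtain \<sigma> where \<sigma>: "strict_mono \<sigma>" and lim: "(x \<circ> \<sigma>) \<longlonglongrightarrow> a"
    using assms(1) unfolding accumulation_point_def by blast
  obtain N where N: "\<And>n. N \<le> n \<Longrightarrow> dist (x (\<sigma> n)) a < e"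
    using tendstoD[OF lim assms(2)] by (auto simp: eventually_sequentially)
  have "\<exists>k\<ge>M. dist (x k) a < e" for M
    using N[of "max M N"] seq_suble[OF \<sigma>, of "max M N"] by (intro exI[of _ "\<sigma> (max M N)"]) auto
  then show ?thesis by (simp add: frequently_sequentially)
qed

lemma desingularized_step_bound:
  fixes d :: "'a::real_normed_vector"
  assumes decrease: "c * t * (norm d)\<^sup>2 \<le> a - b" and desing: "a - b \<le> G * (\<phi> a - \<phi> b)"
    and relerr: "G \<le> C * norm d" and "0 \<le> G" "d \<noteq> 0" "0 < c" "0 < C" "0 < t"
  shows "norm (t *\<^sub>R d) \<le> C / c * (\<phi> a - \<phi> b)"
proof -
  have n: "0 < norm d" using \<open>d \<noteq> 0\<close> by simp
  then have "0 < c * t * (norm d)\<^sup>2" using \<open>0 < c\<close> \<open>0 < t\<close> by simp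
  then have "0 < G * (\<phi> a - \<phi> b)" using decrease desing by linarith
  then have "0 \<le> \<phi> a - \<phi> b" using \<open>0 \<le> G\<close> by (simp add: zero_less_mult_iff)
  then have "G * (\<phi> a - \<phi> b) \<le> C * norm d * (\<phi> a - \<phi> b)"
    using relerr by (rule mult_right_mono[rotated])
  then have "c * t * (norm d)\<^sup>2 \<le> C * norm d * (\<phi> a - \<phi> b)"
    using decrease desing by linarith
  then have "norm d * (c * (t * norm d)) \<le> norm d * (C * (\<phi> a - \<phi> b))"
    by (simp add: power2_eq_square mult_ac)
  then have "c * (t * norm d) \<le> C * (\<phi> a - \<phi> b)"
    by (metis mult_le_cancel_left_pos n)
  then show ?thesis
    using \<open>0 < c\<close> \<open>0 < t\<close> by (simp add: field_simps)
qed

lemma summable_steps_if_eventually_local_telescoping: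
  fixes x :: "nat \<Rightarrow> 'a::real_normed_vector" and \<Phi> :: "nat \<Rightarrow> real"
  assumes acc: "accumulation_point x z" and "0 < \<rho>" and lim: "\<Phi> \<longlonglongrightarrow> 0"
    and nonneg: "\<And>k. K \<le> k \<Longrightarrow> 0 \<le> \<Phi> k"
    and step: "\<And>k. K \<le> k \<Longrightarrow> x k \<in> ball z \<rho> \<Longrightarrow> norm (x (Suc k) - x k) \<le> \<Phi> k - \<Phi> (Suc k)"
  shows "summable (\<lambda>k. norm (x (Suc k) - x k))"
proof -
  have "\<forall>\<^sub>F k in sequentially. K \<le> k \<and> \<Phi> k < \<rho> / 2"
    using lim \<open>0 < \<rho>\<close> by (intro eventually_conj eventually_ge_at_top order_tendstoD(2)) auto
  with accumulation_point_frequently_near[OF acc, of "\<rho> / 2"] \<open>0 < \<rho>\<close>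
  have "\<exists>\<^sub>F k in sequentially. (K \<le> k \<and> \<Phi> k < \<rho> / 2) \<and> dist (x k) z < \<rho> / 2"
    by (intro frequently_eventually_conj) auto
  then obtain K' where "K \<le> K'" "\<Phi> K' < \<rho> / 2" "dist (x K') z < \<rho> / 2"
    by (auto elim: frequentlyE)
  then have "summable (\<lambda>j. norm (x (Suc j + K') - x (j + K')))"
    using nonneg step dist_commute[of z "x K'"]
    by (intro summable_steps_if_local_telescoping[of "\<lambda>j. x (j + K')" z \<rho> "\<lambda>j. \<Phi> (j + K')"]) auto
  then show ?thesis
    using summable_iff_shift[of "\<lambda>k. norm (x (Suc k) - x k)" K'] by simp
qed

lemma summable_steps_of_KL:
  fixes f :: "'a::real_normed_vector \<Rightarrow> real" and x d :: "nat \<Rightarrow> 'a"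
  assumes step: "\<And>k. x (Suc k) = x k + t k *\<^sub>R d k" and t: "\<And>k. 0 < t k"
    and c: "0 < c" and C: "0 < C"
    and decrease: "\<And>k. K \<le> k \<Longrightarrow> f (x (Suc k)) \<le> f (x k) - c * t k * (norm (d k))\<^sup>2"
    and relerr: "\<And>k. K \<le> k \<Longrightarrow> d k \<noteq> 0 \<Longrightarrow> norm (grad (x k)) \<le> C * norm (d k)"
    and above: "\<And>k. K \<le> k \<Longrightarrow> f xb < f (x k)" and flim: "(\<lambda>k. f (x k)) \<longlonglongrightarrow> f xb"
    and acc: "accumulation_point x xb" and KL: "KL_at f grad xb"
  shows "summable (\<lambda>k. norm (x (Suc k) - x k))"
proof -
  define F where "F k = f (x k) - f xb" for k
  obtain U \<eta> \<phi> where "open U" "xb \<in> U" "\<eta> > 0"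
    and \<phi>_nonneg: "\<And>s. 0 \<le> s \<Longrightarrow> s \<le> \<eta> \<Longrightarrow> 0 \<le> \<phi> s" and \<phi>_lim: "(\<phi> \<longlongrightarrow> 0) (at_right 0)"
    and desing: "\<And>y b. y \<in> U \<Longrightarrow> 0 < b \<Longrightarrow> b \<le> f y - f xb \<Longrightarrow> f y - f xb < \<eta> \<Longrightarrow>
           f y - f xb - b \<le> norm (grad y) * (\<phi> (f y - f xb) - \<phi> b)"
    using KL_at_obtains_desingularizer[OF KL] by blast
  obtain \<rho> where "0 < \<rho>" and ball: "ball xb \<rho> \<subseteq> U"
    using \<open>open U\<close> \<open>xb \<in> U\<close> open_contains_ball by blast
  have F_pos: "K \<le> k \<Longrightarrow> 0 < F k" for k using above by (simp add: F_def)
  have F_lim: "F \<longlonglongrightarrow> 0"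
    unfolding F_def[abs_def] using flim by (rule LIM_zero)
  then have "\<forall>\<^sub>F k in sequentially. F k < \<eta>"
    using \<open>0 < \<eta>\<close> by (rule order_tendstoD(2))
  then obtain K\<^sub>\<eta> where F_small: "\<And>k. K\<^sub>\<eta> \<le> k \<Longrightarrow> F k < \<eta>"
    by (auto simp: eventually_sequentially)
  have "filterlim F (at_right 0) sequentially"
    using F_lim F_pos by (force simp: filterlim_at eventually_sequentially)
  then have "(\<lambda>k. C / c * \<phi> (F k)) \<longlonglongrightarrow> 0"
    by (intro tendsto_mult_right_zero filterlim_compose[OF \<phi>_lim])
  then show ?thesis
  proof (rule summable_steps_if_eventually_local_telescoping[OF acc \<open>0 < \<rho>\<close>, of _ "max K K\<^sub>\<eta>"])
    fix k assume "max K K\<^sub>\<eta> \<le> k"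
    then have k: "K \<le> k" "0 < F k" "F k < \<eta>" using F_pos F_small by auto
    then show "0 \<le> C / c * \<phi> (F k)" using \<phi>_nonneg c C by simp
    assume "x k \<in> ball xb \<rho>"
    have F_dec: "c * t k * (norm (d k))\<^sup>2 \<le> F k - F (Suc k)"
      using decrease[OF k(1)] by (simp add: F_def)
    show "norm (x (Suc k) - x k) \<le> C / c * \<phi> (F k) - C / c * \<phi> (F (Suc k))"
    proof (cases "d k = 0")
      case False
      have "0 \<le> c * t k * (norm (d k))\<^sup>2" using c t[of k] by simp
      then have "F k - F (Suc k) \<le> norm (grad (x k)) * (\<phi> (F k) - \<phi> (F (Suc k)))"
        using desing[of "x k" "F (Suc k)"] \<open>x k \<in> ball xb \<rho>\<close> ball F_pos[of "Suc k"] k F_dec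
        by (auto simp: F_def)
      then show ?thesis
        using desingularized_step_bound[OF F_dec _ relerr[OF k(1) False] norm_ge_zero False c C t]
        by (simp add: step right_diff_distrib)
    qed (simp add: step F_def)
  qed
qed

lemma KL_descent_sequence_converges:
  fixes f :: "'a::banach \<Rightarrow> real" and x d :: "nat \<Rightarrow> 'a"
  assumes f: "continuous_on UNIV f"
    and step: "\<And>k. x (Suc k) = x k + t k *\<^sub>R d k" and t: "\<And>k. 0 < t k"
    and c: "0 < c" and C: "0 < C"
    and decrease: "\<And>k. K \<le> k \<Longrightarrow> f (x (Suc k)) \<le> f (x k) - c * t k * (norm (d k))\<^sup>2"
    and relerr: "\<And>k. K \<le> k \<Longrightarrow> d k \<noteq> 0 \<Longrightarrow> norm (grad (x k)) \<le> C * norm (d k)"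
    and acc: "accumulation_point x xb" and KL: "KL_at f grad xb"
  shows "x \<longlonglongrightarrow> xb"
proof -
  obtain \<sigma> where \<sigma>: "strict_mono \<sigma>" and "(\<lambda>n. x (\<sigma> n)) \<longlonglongrightarrow> xb"
    using acc unfolding accumulation_point_def by (auto simp: o_def)
  then have "((\<lambda>k. f (x k)) \<circ> \<sigma>) \<longlonglongrightarrow> f xb"
    using continuous_on_tendsto_compose[OF f] by (simp add: o_def)
  moreover have f_dec: "f (x (Suc k)) \<le> f (x k)" if "K \<le> k" for k
  proof -
    have "0 \<le> c * t k * (norm (d k))\<^sup>2" using c t[of k] by simp
    then show ?thesis using decrease[OF that] by simp
  qed
  ultimately have f_lower: "\<And>k. K \<le> k \<Longrightarrow> f xb \<le> f (x k)" and f_lim: "(\<lambda>k. f (x k)) \<longlonglongrightarrow> f xb"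
    using antimono_tendsto_subseq_limit[of K "\<lambda>k. f (x k)", OF _ \<sigma>] by blast+
  have "summable (\<lambda>k. norm (x (Suc k) - x k))"
  proof (cases "\<exists>k\<^sub>0\<ge>K. f (x k\<^sub>0) = f xb")
    case True
    then obtain k\<^sub>0 where "K \<le> k\<^sub>0" "f (x k\<^sub>0) = f xb" by blast
    have "x (Suc j) - x j = 0" if "k\<^sub>0 \<le> j" for j
    proof -
      have "f (x j) \<le> f (x k\<^sub>0)"
        by (rule lift_Suc_antimono_le_ivl[of "{K..}"]) (use that \<open>K \<le> k\<^sub>0\<close> f_dec in auto)
      then have "c * t j * (norm (d j))\<^sup>2 \<le> 0"
        using decrease[of j] f_lower[of "Suc j"] that \<open>K \<le> k\<^sub>0\<close> \<open>f (x k\<^sub>0) = f xb\<close> by simp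
      then show ?thesis using c t[of j] by (simp add: step mult_le_0_iff)
    qed
    then have "\<forall>\<^sub>F j in sequentially. norm (x (Suc j) - x j) = 0"
      by (auto simp: eventually_sequentially)
    then show ?thesis
      using summable_cong[of "\<lambda>j. norm (x (Suc j) - x j)" "\<lambda>_. 0"] by simp
  next
    case False
    have "f xb < f (x k)" if "K \<le> k" for k
      using False f_lower[OF that] that by (auto simp: order_le_less)
    then show ?thesis
      using summable_steps_of_KL[OF step t c C decrease relerr _ f_lim acc KL] by blast
  qed
  then show ?thesis using acc by (rule tendsto_accumulation_point_if_summable_steps)
qed

lemma diminishing_steps_admissible:
  assumes "0 < L" and "diminishing_steps t"
  obtains c K where "0 < c" "\<And>k. K \<le> k \<Longrightarrow> c \<le> 1 - L * t k / 2"
    and "filterlim (\<lambda>n. \<Sum>k<n. t k) at_top sequentially"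
proof -
  have "t \<longlonglongrightarrow> 0" and sums: "filterlim (\<lambda>n. \<Sum>k<n. t k) at_top sequentially"
    using assms(2) by (auto simp: diminishing_steps_def)
  then have "\<forall>\<^sub>F k in sequentially. t k < 1 / L"
    using \<open>0 < L\<close> by (intro order_tendstoD) auto
  then obtain K where "\<And>k. K \<le> k \<Longrightarrow> t k < 1 / L"
    by (auto simp: eventually_sequentially)
  then have "1 / 2 \<le> 1 - L * t k / 2" if "K \<le> k" for k
    using that \<open>0 < L\<close> by (auto simp: field_simps less_imp_le)
  with sums show ?thesis by (intro that[of "1 / 2" K]) auto
qed

lemma constant_type_steps_admissible:
  assumes "0 < L" and "constant_type_steps L t"
  obtains c K where "0 < c" "\<And>k. K \<le> k \<Longrightarrow> c \<le> 1 - L * t k / 2"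
    and "filterlim (\<lambda>n. \<Sum>k<n. t k) at_top sequentially"
proof -
  obtain \<delta> \<delta>' where "0 < \<delta>" "0 < \<delta>'" and t: "\<And>k. \<delta>' \<le> t k \<and> t k \<le> (2 - \<delta>) / L"
    using assms(2) unfolding constant_type_steps_def by blast
  have "\<delta> / 2 \<le> 1 - L * t k / 2" for k
    using t[of k] \<open>0 < L\<close> by (simp add: field_simps)
  moreover have "filterlim (\<lambda>n. \<delta>' * real n) at_top sequentially"
    using \<open>0 < \<delta>'\<close> by (intro filterlim_tendsto_pos_mult_at_top filterlim_real_sequentially) auto
  then have "filterlim (\<lambda>n. \<Sum>k<n. t k) at_top sequentially"
  proof (rule filterlim_at_top_mono)
    show "\<forall>\<^sub>F n in sequentially. \<delta>' * real n \<le> (\<Sum>k<n. t k)"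
      using sum_mono[of "{..<_}" "\<lambda>_. \<delta>'" t] t by (simp add: mult.commute)
  qed
  ultimately show ?thesis using \<open>0 < \<delta>\<close> by (intro that[of "\<delta> / 2" 0]) auto
qed

lemma step_sizes_admissible:
  assumes "0 < L" and "diminishing_steps t \<or> constant_type_steps L t"
  obtains c K where "0 < c" "\<And>k. K \<le> k \<Longrightarrow> c \<le> 1 - L * t k / 2"
    and "filterlim (\<lambda>n. \<Sum>k<n. t k) at_top sequentially"
  using assms diminishing_steps_admissible constant_type_steps_admissible by metis

locale IRG =
  fixes grad :: "'a::real_inner \<Rightarrow> 'a" and \<mu> \<theta> :: real and \<rho> :: "nat \<Rightarrow> real"
    and x g d :: "nat \<Rightarrow> 'a" and \<epsilon> r t :: "nat \<Rightarrow> real"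
  assumes run: "IRG_run grad \<mu> \<theta> \<rho> x g \<epsilon> r d t"
begin

definition null_step :: "nat \<Rightarrow> bool" where
  "null_step k \<longleftrightarrow> norm (g k) \<le> r k + \<epsilon> k"

lemma mu_pos: "0 < \<mu>" and mu_less_1: "\<mu> < 1" and theta_pos: "0 < \<theta>"
  and t_pos: "0 < t k" and x_Suc: "x (Suc k) = x k + t k *\<^sub>R d k"
  and grad_error: "norm (g k - grad (x k)) \<le> \<epsilon> k"
  using run by (auto simp: IRG_run_def)

lemma null_step_update:
  "null_step k \<Longrightarrow> r (Suc k) = \<mu> * r k \<and> \<epsilon> (Suc k) = \<theta> * \<epsilon> k \<and> d k = 0"
  using run by (auto simp: IRG_run_def null_step_def)

lemma serious_step_update:
  "\<not> null_step k \<Longrightarrow> r (Suc k) = r k \<and> \<epsilon> (Suc k) = \<epsilon> k \<and>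
     d k = - ((norm (g k) - \<epsilon> k) / norm (g k)) *\<^sub>R g k"
  using run by (auto simp: IRG_run_def null_step_def)

lemma eps_pos: "0 < \<epsilon> k" and radius_pos: "0 < r k"
proof -
  have "0 < \<epsilon> k \<and> 0 < r k"
  proof (induction k)
    case 0
    then show ?case using run by (simp add: IRG_run_def)
  next
    case (Suc k)
    then show ?case
      using null_step_update[of k] serious_step_update[of k] mu_pos theta_pos
      by (cases "null_step k") auto
  qed
  then show "0 < \<epsilon> k" "0 < r k" by auto
qed

lemma eps_ratio_le:
  assumes "\<theta> \<le> \<mu>"
  shows "\<epsilon> k * r 0 \<le> \<epsilon> 0 * r k"
proof (induction k)
  case (Suc k)
  show ?case
  proof (cases "null_step k")
    case True
    have "\<theta> * (\<epsilon> k * r 0) \<le> \<mu> * (\<epsilon> k * r 0)"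
      using assms eps_pos[of k] radius_pos[of 0] by (intro mult_right_mono) auto
    also have "\<dots> \<le> \<mu> * (\<epsilon> 0 * r k)"
      using Suc mu_pos by (intro mult_left_mono) auto
    finally show ?thesis using null_step_update[OF True] by (simp add: algebra_simps)
  next
    case False
    then show ?thesis using serious_step_update[OF False] Suc by simp
  qed
qed simp

lemma grad_le_approx: "norm (grad (x k)) \<le> norm (g k) + \<epsilon> k"
  using norm_triangle_ineq4[of "g k" "g k - grad (x k)"] grad_error[of k] by simp

lemma null_step_grad_le: "null_step k \<Longrightarrow> norm (grad (x k)) \<le> r k + 2 * \<epsilon> k"
  using grad_le_approx[of k] by (simp add: null_step_def)

lemma serious_step_norm_direction:
  assumes "\<not> null_step k"
  shows "norm (d k) = norm (g k) - \<epsilon> k" and "r k < norm (d k)"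
proof -
  have "r k + \<epsilon> k < norm (g k)" using assms by (simp add: null_step_def)
  then have "0 < norm (g k) - \<epsilon> k" "0 < norm (g k)"
    using radius_pos[of k] eps_pos[of k] by auto
  then show "norm (d k) = norm (g k) - \<epsilon> k"
    using serious_step_update[OF assms] by simp
  with \<open>r k + \<epsilon> k < norm (g k)\<close> show "r k < norm (d k)" by simp
qed

lemma descent_direction: "grad (x k) \<bullet> d k \<le> - (norm (d k))\<^sup>2"
proof (cases "null_step k")
  case True
  then show ?thesis using null_step_update by simp
next
  case serious: False
  define \<alpha> where "\<alpha> = (norm (g k) - \<epsilon> k) / norm (g k)"
  have "0 < norm (d k)" "norm (d k) = norm (g k) - \<epsilon> k"
    using serious_step_norm_direction[OF serious] radius_pos[of k] by auto
  moreover have "0 < norm (g k)"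
    using calculation eps_pos[of k] by linarith
  ultimately have "0 < \<alpha>" "\<alpha> * norm (g k) = norm (d k)"
    by (auto simp: \<alpha>_def)
  \<comment> \<open>Cauchy--Schwarz and the gradient error: \<open>\<langle>\<nabla>f(x\<^sub>k), g\<^sub>k\<rangle> \<ge> \<parallel>g\<^sub>k\<parallel> (\<parallel>g\<^sub>k\<parallel> - \<epsilon>\<^sub>k) = \<parallel>g\<^sub>k\<parallel> \<parallel>d\<^sub>k\<parallel>\<close>.\<close>
  have "(g k - grad (x k)) \<bullet> g k \<le> \<epsilon> k * norm (g k)"
    using norm_cauchy_schwarz[of "g k - grad (x k)" "g k"] grad_error[of k]
    by (meson mult_right_mono norm_ge_zero order_trans)
  then have "norm (g k) * (norm (g k) - \<epsilon> k) \<le> grad (x k) \<bullet> g k"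
    by (simp add: inner_diff_left dot_square_norm power2_eq_square algebra_simps)
  then have "\<alpha> * norm (g k) * (norm (g k) - \<epsilon> k) \<le> \<alpha> * (grad (x k) \<bullet> g k)"
    using \<open>0 < \<alpha>\<close> by (simp add: mult_left_mono mult.assoc)
  then show ?thesis
    using serious_step_update[OF serious] \<open>norm (d k) = norm (g k) - \<epsilon> k\<close>
      \<open>\<alpha> * norm (g k) = norm (d k)\<close>
    by (simp add: \<alpha>_def[symmetric] power2_eq_square)
qed

lemma grad_le_direction:
  assumes "\<theta> \<le> \<mu>" and "d k \<noteq> 0"
  shows "norm (grad (x k)) \<le> (1 + 2 * \<epsilon> 0 / r 0) * norm (d k)"
proof -
  have serious: "\<not> null_step k" using assms(2) null_step_update by blast
  have "\<epsilon> k \<le> \<epsilon> 0 / r 0 * r k"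
    using eps_ratio_le[OF assms(1), of k] radius_pos[of 0] by (simp add: field_simps)
  also have "\<dots> \<le> \<epsilon> 0 / r 0 * norm (d k)"
    using serious_step_norm_direction(2)[OF serious] eps_pos[of 0] radius_pos[of 0]
    by (intro mult_left_mono) auto
  finally have "\<epsilon> k \<le> \<epsilon> 0 / r 0 * norm (d k)" .
  moreover have "norm (grad (x k)) \<le> norm (d k) + 2 * \<epsilon> k"
    using grad_le_approx[of k] serious_step_norm_direction(1)[OF serious] by simp
  ultimately have "norm (grad (x k)) \<le> norm (d k) + 2 * (\<epsilon> 0 / r 0 * norm (d k))"
    by linarith
  then show ?thesis by (simp add: algebra_simps)
qed

lemma sufficient_decrease:
  fixes f :: "'a \<Rightarrow> real"
  assumes "L_descent f grad L" and "c \<le> 1 - L * t k / 2"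
  shows "f (x (Suc k)) \<le> f (x k) - c * t k * (norm (d k))\<^sup>2"
proof -
  have "f (x (Suc k)) \<le> f (x k) + grad (x k) \<bullet> (x (Suc k) - x k) + L / 2 * (norm (x (Suc k) - x k))\<^sup>2"
    using assms(1) by (simp add: L_descent_def)
  also have "\<dots> = f (x k) + t k * (grad (x k) \<bullet> d k) + L / 2 * (t k)\<^sup>2 * (norm (d k))\<^sup>2"
    using t_pos[of k] by (simp add: x_Suc power_mult_distrib)
  also have "\<dots> \<le> f (x k) + t k * (- (norm (d k))\<^sup>2) + L / 2 * (t k)\<^sup>2 * (norm (d k))\<^sup>2"
    using mult_left_mono[OF descent_direction[of k], of "t k"] t_pos[of k] by simp
  also have "\<dots> = f (x k) - (1 - L * t k / 2) * t k * (norm (d k))\<^sup>2"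
    by (simp add: power2_eq_square algebra_simps)
  also have "\<dots> \<le> f (x k) - c * t k * (norm (d k))\<^sup>2"
    using assms(2) t_pos[of k] by (simp add: mult_right_mono)
  finally show ?thesis .
qed

lemma frequently_null_step:
  fixes f :: "'a \<Rightarrow> real"
  assumes c: "0 < c"
    and decrease: "\<And>k. K \<le> k \<Longrightarrow> f (x (Suc k)) \<le> f (x k) - c * t k * (norm (d k))\<^sup>2"
    and sums: "filterlim (\<lambda>n. \<Sum>k<n. t k) at_top sequentially"
    and bdd: "bdd_below (range (\<lambda>k. f (x k)))"
  shows "\<exists>\<^sub>F k in sequentially. null_step k"
proof (rule ccontr)
  assume "\<not> ?thesis"
  then obtain M where M: "\<And>k. M \<le> k \<Longrightarrow> \<not> null_step k"
    by (auto simp: frequently_def eventually_sequentially)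
  define M' where "M' = max M K"
  \<comment> \<open>Serious steps keep \<open>r\<close> fixed and have \<open>\<parallel>d\<^sub>k\<parallel> > r\<^sub>k\<close>, so \<open>u\<close> is nonincreasing.\<close>
  define u where "u n = f (x n) + c * (r M')\<^sup>2 * (\<Sum>k<n. t k)" for n
  have r_const: "r k = r M'" if "M' \<le> k" for k
    using that
  proof (induction k rule: dec_induct)
    case (step k)
    then show ?case using serious_step_update[OF M[of k]] by (simp add: M'_def)
  qed simp
  have u_dec: "u k \<le> u M'" if "M' \<le> k" for k
  proof (rule lift_Suc_antimono_le_ivl[of "{M'..}"])
    fix n assume "n \<in> {M'..}"
    then have "M \<le> n" "K \<le> n" "r n = r M'"
      using r_const[of n] by (auto simp: M'_def)
    then have "r M' < norm (d n)"
      using serious_step_norm_direction(2)[OF M[of n]] by simp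
    then have "c * t n * (r M')\<^sup>2 \<le> c * t n * (norm (d n))\<^sup>2"
      using c t_pos[of n] radius_pos[of M'] by (intro mult_left_mono power_mono) auto
    then show "u (Suc n) \<le> u n"
      using decrease[OF \<open>K \<le> n\<close>] by (simp add: u_def algebra_simps)
  qed (use that in auto)
  obtain B where B: "\<And>k. B \<le> f (x k)"
    using bdd by (auto simp: bdd_below_def)
  have "0 < c * (r M')\<^sup>2" using c radius_pos[of M'] by simp
  moreover have "\<forall>\<^sub>F n in sequentially. (u M' - B) / (c * (r M')\<^sup>2) < (\<Sum>k<n. t k) \<and> M' \<le> n"
    using sums eventually_ge_at_top[of M'] unfolding filterlim_at_top_dense
    by (intro eventually_conj) auto
  then obtain n where "(u M' - B) / (c * (r M')\<^sup>2) < (\<Sum>k<n. t k)" "M' \<le> n"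
    by (auto dest: eventually_happens)
  ultimately have "u M' < f (x n) + c * (r M')\<^sup>2 * (\<Sum>k<n. t k)"
    using B[of n] by (simp add: field_simps)
  then show False using u_dec[OF \<open>M' \<le> n\<close>] by (simp add: u_def)
qed

lemma radius_tendsto_zero:
  assumes null: "\<exists>\<^sub>F k in sequentially. null_step k"
  shows "r \<longlonglongrightarrow> 0"
proof -
  have "decseq r"
  proof (rule decseq_SucI)
    fix k show "r (Suc k) \<le> r k"
      using null_step_update[of k] serious_step_update[of k] radius_pos[of k] mu_less_1
      by (cases "null_step k") auto
  qed
  then obtain l where l: "r \<longlonglongrightarrow> l" "\<And>k. l \<le> r k"
    using decseq_convergent[of r 0] radius_pos by (auto simp: less_imp_le)
  have "0 \<le> l" using LIMSEQ_le_const[OF l(1)] radius_pos by (simp add: less_imp_le)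
  moreover have "\<not> 0 < l"
  proof
    assume "0 < l"
    then have "l < l / \<mu>"
      using mu_pos mu_less_1 by (simp add: less_divide_eq)
    with l(1) have "\<forall>\<^sub>F k in sequentially. r k < l / \<mu>"
      by (rule order_tendstoD(2))
    with null have "\<exists>\<^sub>F k in sequentially. r k < l / \<mu> \<and> null_step k"
      by (rule frequently_eventually_conj)
    then obtain k where "null_step k" "r k < l / \<mu>" by (auto elim: frequentlyE)
    then have "r (Suc k) < l"
      using null_step_update mu_pos by (simp add: field_simps)
    with l(2)[of "Suc k"] show False by simp
  qed
  ultimately show ?thesis using l(1) by simp
qed

lemma eps_tendsto_zero:
  assumes "\<theta> \<le> \<mu>" and "r \<longlonglongrightarrow> 0"
  shows "\<epsilon> \<longlonglongrightarrow> 0"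
proof (rule real_tendsto_sandwich[of "\<lambda>_. 0" \<epsilon> _ "\<lambda>k. \<epsilon> 0 / r 0 * r k"])
  show "\<forall>\<^sub>F k in sequentially. \<epsilon> k \<le> \<epsilon> 0 / r 0 * r k"
    using eps_ratio_le[OF assms(1)] radius_pos[of 0] by (simp add: field_simps)
  show "(\<lambda>k. \<epsilon> 0 / r 0 * r k) \<longlonglongrightarrow> 0"
    by (rule tendsto_mult_right_zero[OF assms(2)])
qed (use eps_pos in \<open>auto simp: less_imp_le\<close>)

lemma stationary_limit:
  assumes "isCont grad xb" and null: "\<exists>\<^sub>F k in sequentially. null_step k"
    and "r \<longlonglongrightarrow> 0" and "\<epsilon> \<longlonglongrightarrow> 0" and "x \<longlonglongrightarrow> xb"
  shows "grad xb = 0"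
proof (rule ccontr)
  assume "grad xb \<noteq> 0"
  then have a: "0 < norm (grad xb) / 2" by simp
  have "(\<lambda>k. norm (grad (x k))) \<longlonglongrightarrow> norm (grad xb)"
    using isCont_tendsto_compose[OF assms(1,5)] by (rule tendsto_norm)
  then have "\<forall>\<^sub>F k in sequentially. norm (grad xb) / 2 < norm (grad (x k))"
    using a by (intro order_tendstoD) auto
  moreover have "(\<lambda>k. r k + 2 * \<epsilon> k) \<longlonglongrightarrow> 0 + 2 * 0"
    using assms(3,4) by (intro tendsto_intros)
  then have "\<forall>\<^sub>F k in sequentially. r k + 2 * \<epsilon> k < norm (grad xb) / 2"
    using a by (intro order_tendstoD) auto
  ultimately have "\<forall>\<^sub>F k in sequentially. \<not> null_step k"
    by eventually_elim (use null_step_grad_le in \<open>smt (verit)\<close>)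
  with null show False by (simp add: frequently_def)
qed

end

theorem mainTheorem14:
  fixes f :: "'a::euclidean_space \<Rightarrow> real" and grad :: "'a \<Rightarrow> 'a"
    and x g d :: "nat \<Rightarrow> 'a" and \<epsilon> r t :: "nat \<Rightarrow> real"
    and \<mu> \<theta> L :: real and xb :: 'a
  assumes deriv: "\<And>y. (f has_derivative (\<lambda>h. grad y \<bullet> h)) (at y)"
    and cont: "continuous_on UNIV grad"
    and Lpos: "L > 0" and desc: "L_descent f grad L"
    and run: "IRG_run grad \<mu> \<theta> \<epsilon> x g \<epsilon> r d t"
    and thmu: "\<theta> < \<mu>"
    and steps: "diminishing_steps t \<or> constant_type_steps L t"
    and acc: "accumulation_point x xb"
    and KL: "KL_at f grad xb"
  shows "grad xb = 0 \<and> x \<longlonglongrightarrow> xb"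
proof -
  interpret IRG grad \<mu> \<theta> \<epsilon> x g d \<epsilon> r t
    using run by unfold_locales
  have "\<theta> \<le> \<mu>" using thmu by simp
  obtain c K where c: "0 < c" and "\<And>k. K \<le> k \<Longrightarrow> c \<le> 1 - L * t k / 2"
    and sums: "filterlim (\<lambda>n. \<Sum>k<n. t k) at_top sequentially"
    using step_sizes_admissible[OF Lpos steps] by blast
  then have decrease: "\<And>k. K \<le> k \<Longrightarrow> f (x (Suc k)) \<le> f (x k) - c * t k * (norm (d k))\<^sup>2"
    using sufficient_decrease[OF desc] by blast
  have f: "continuous_on UNIV f"
    using has_derivative_continuous[OF deriv] by (simp add: continuous_at_imp_continuous_on)
  have "0 < 1 + 2 * \<epsilon> 0 / r 0"
    using eps_pos[of 0] radius_pos[of 0] by (simp add: add_pos_nonneg)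
  with \<open>\<theta> \<le> \<mu>\<close> have conv: "x \<longlonglongrightarrow> xb"
    using KL_descent_sequence_converges[OF f x_Suc t_pos c _ decrease grad_le_direction acc KL] by blast
  then have "convergent (\<lambda>k. f (x k))"
    using continuous_on_tendsto_compose[OF f] by (auto simp: convergent_def)
  then have "bdd_below (range (\<lambda>k. f (x k)))"
    by (intro Bseq_bdd_below convergent_imp_Bseq)
  then have null: "\<exists>\<^sub>F k in sequentially. null_step k"
    using frequently_null_step[OF c decrease sums] by blast
  then have "r \<longlonglongrightarrow> 0" by (rule radius_tendsto_zero)
  then have "grad xb = 0"
    using stationary_limit[OF _ null _ eps_tendsto_zero[OF \<open>\<theta> \<le> \<mu>\<close>] conv] cont
    by (simp add: continuous_on_eq_continuous_at)
  with conv show ?thesis by simp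
qed

end
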